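(* Let $G$ be a graph, let $S,T \subseteq V(G)$ be disjoint, and let $P^-$ and $P^+$ be the closest and farthest minimum left-restricted $(S,T)$-separators, i.e. minimum left-restricted $(S,T)$-separators such that every minimum left-restricted $(S,T)$-separator $P$ satisfies $R_G(S,P^-) \subseteq R_G(S,P) \subseteq R_G(S,P^+)$. Then for any vertex $v \in V(G)$: (1) $\lambda^{\mathrm{L}}_G(S \cup \{v\}, T) > \lambda^{\mathrm{L}}_G(S,T)$ if and only if $v \in R_G(T,P^+) \cup P^+$; (2) $\lambda^{\mathrm{L}}_G(S, T \cup \{v\}) > \lambda^{\mathrm{L}}_G(S,T)$ if and only if $v \in R_G(S,P^-)$.
   Context: For $S,T \subseteq V(G)$, a set $P \subseteq V(G)$ is an (unrestricted) $(S,T)$-separator if every path from a vertex of $S$ to a vertex of $T$ contains a vertex of $P$; it is a left-restricted $(S,T)$-separator if additionally $P \cap S = \emptyset$. $\lambda^{\mathrm{L}}_G(S,T)$ is the minimum size of a left-restricted $(S,T)$-separator, or $+\infty$ if none exists (which happens exactly when $S \cap T \neq \emptyset$). For vertex sets $X,P$, $R_G(X,P)$ denotes the set of vertices reachable in $G-P$ from at least one vertex of $X \setminus P$. (Closest and farthest minimum left-restricted separators exist when $S \cap T = \emptyset$.) *)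

theory Defs
  imports Main "HOL-Library.Extended_Nat"
begin

definition graph :: "'a set \<Rightarrow> ('a \<Rightarrow> 'a \<Rightarrow> bool) \<Rightarrow> bool" where
  "graph V E \<longleftrightarrow> finite V \<and> (\<forall>u v. E u v \<longrightarrow> u \<in> V \<and> v \<in> V \<and> E v u \<and> u \<noteq> v)"

definition gpath :: "'a set \<Rightarrow> ('a \<Rightarrow> 'a \<Rightarrow> bool) \<Rightarrow> 'a list \<Rightarrow> bool" where
  "gpath V E p \<longleftrightarrow> p \<noteq> [] \<and> set p \<subseteq> V \<and> distinct p \<and> successively E p"

definition separator :: "'a set \<Rightarrow> ('a \<Rightarrow> 'a \<Rightarrow> bool) \<Rightarrow> 'a set \<Rightarrow> 'a set \<Rightarrow> 'a set \<Rightarrow> bool" where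
  "separator V E S T P \<longleftrightarrow> P \<subseteq> V \<and>
     (\<forall>p. gpath V E p \<and> hd p \<in> S \<and> last p \<in> T \<longrightarrow> set p \<inter> P \<noteq> {})"

definition lsep :: "'a set \<Rightarrow> ('a \<Rightarrow> 'a \<Rightarrow> bool) \<Rightarrow> 'a set \<Rightarrow> 'a set \<Rightarrow> 'a set \<Rightarrow> bool" where
  "lsep V E S T P \<longleftrightarrow> separator V E S T P \<and> P \<inter> S = {}"

text \<open>\<lambda>^L_G(S,T): minimum size of a left-restricted separator, \<infinity> if none (Inf {} = \<infinity>).\<close>
definition lambdaL :: "'a set \<Rightarrow> ('a \<Rightarrow> 'a \<Rightarrow> bool) \<Rightarrow> 'a set \<Rightarrow> 'a set \<Rightarrow> enat" where
  "lambdaL V E S T = (INF P \<in> {P. lsep V E S T P}. enat (card P))"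

definition min_lsep :: "'a set \<Rightarrow> ('a \<Rightarrow> 'a \<Rightarrow> bool) \<Rightarrow> 'a set \<Rightarrow> 'a set \<Rightarrow> 'a set \<Rightarrow> bool" where
  "min_lsep V E S T P \<longleftrightarrow> lsep V E S T P \<and> enat (card P) = lambdaL V E S T"

definition reach :: "'a set \<Rightarrow> ('a \<Rightarrow> 'a \<Rightarrow> bool) \<Rightarrow> 'a set \<Rightarrow> 'a set \<Rightarrow> 'a set" where
  "reach V E X P = {y. \<exists>p. gpath (V - P) E p \<and> hd p \<in> X - P \<and> last p = y}"

end

theory Submission
  imports Defs
begin

text \<open>
  If v lies outside the region in question, the extremal separator itself still separates the
  enlarged pair, so \<open>\<lambda>\<^sup>L\<close> does not grow. Conversely, a separator of the enlarged pair of size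
  \<open>\<lambda>\<^sup>L(S,T)\<close> would be a minimum \<open>(S,T)\<close>-separator. For (2), closestness of \<open>P\<^sub>m\<close> puts v on its
  S-side, which that separator must cut off from v. For (1), uncross it with \<open>P\<^sub>p\<close>: by
  submodularity of the size of the outer boundary \<open>N(X)\<close>, the boundary of the union of the two
  S-sides is again a minimum separator; farthestness forces it to equal \<open>P\<^sub>p\<close>, and then v,
  which lies in that union, can be neither in \<open>P\<^sub>p\<close> nor reachable from T avoiding \<open>P\<^sub>p\<close>.
\<close>

definition boundary :: "'a set \<Rightarrow> ('a \<Rightarrow> 'a \<Rightarrow> bool) \<Rightarrow> 'a set \<Rightarrow> 'a set" where
  "boundary V E X = {y \<in> V. y \<notin> X \<and> (\<exists>x\<in>X. E x y)}"

lemma boundary_disjoint: "boundary V E X \<inter> X = {}"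
  unfolding boundary_def by auto

lemma successively_enters:
  assumes "successively E p" "p \<noteq> []" "hd p \<notin> X" "last p \<in> X"
  shows "\<exists>x\<in>set p. \<exists>y\<in>set p. x \<notin> X \<and> y \<in> X \<and> E x y"
  using assms
proof (induction p rule: induct_list012)
  case (3 a b rest)
  show ?case
  proof (cases "b \<in> X")
    case True
    then show ?thesis using "3.prems" by (intro bexI[of _ a] bexI[of _ b]) auto
  next
    case False
    then have "\<exists>x\<in>set (b # rest). \<exists>y\<in>set (b # rest). x \<notin> X \<and> y \<in> X \<and> E x y"
      using "3.IH"(2) "3.prems" by simp
    then show ?thesis by (meson list.set_intros(2))
  qed
qed simp_all

lemma gpath_rev:
  assumes "graph V E" "gpath V E p"
  shows "gpath V E (rev p)"
proof -
  have "successively E p" using assms(2) unfolding gpath_def by simp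
  then have "successively (\<lambda>x y. E y x) p"
    by (rule successively_mono) (use assms(1) in \<open>simp add: graph_def\<close>)
  then show ?thesis using assms(2) unfolding gpath_def by simp
qed

lemma in_reach_if_on_path:
  assumes "gpath (V - P) E q" "hd q \<in> X - P" "z \<in> set q"
  shows "z \<in> reach V E X P"
proof -
  obtain ys zs where q: "q = ys @ z # zs" using split_list[OF assms(3)] by blast
  have "successively E ((ys @ [z]) @ zs)" using assms(1) q unfolding gpath_def by simp
  then have "successively E (ys @ [z])" by (simp only: successively_append_iff)
  then have "gpath (V - P) E (ys @ [z])" using assms(1) q unfolding gpath_def by auto
  moreover have "hd (ys @ [z]) = hd q" using q by (cases ys) auto
  ultimately show ?thesis unfolding reach_def using assms(2) by force
qed

lemma diff_subset_reach: "X \<subseteq> V \<Longrightarrow> X - P \<subseteq> reach V E X P"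
  unfolding reach_def gpath_def by (force intro: exI[of _ "[_]"])

lemma reach_disjoint_target: "lsep V E X T P \<Longrightarrow> reach V E X P \<inter> T = {}"
  unfolding lsep_def separator_def reach_def gpath_def by blast

lemma reach_subset_reach_if_disjoint:
  assumes "Q \<inter> reach V E X P = {}"
  shows "reach V E X P \<subseteq> reach V E X Q"
proof
  fix y assume "y \<in> reach V E X P"
  then obtain q where q: "gpath (V - P) E q" "hd q \<in> X - P" "last q = y"
    unfolding reach_def by auto
  have on_q: "set q \<subseteq> reach V E X P" using in_reach_if_on_path[OF q(1,2)] by blast
  have "hd q \<in> set q" using q(1) unfolding gpath_def by simp
  then have "hd q \<in> X - Q" using q(2) on_q assms by blast
  moreover have "gpath (V - Q) E q" using q(1) on_q assms unfolding gpath_def by auto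
  ultimately show "y \<in> reach V E X Q" unfolding reach_def using q(3) by auto
qed

text \<open>Symmetry of E is needed: a path from outside X into X has its last outside vertex in \<open>N(X)\<close>.\<close>
lemma reach_boundary_disjoint:
  assumes "graph V E" "T \<inter> X = {}"
  shows "reach V E T (boundary V E X) \<inter> X = {}"
proof (rule ccontr)
  assume "reach V E T (boundary V E X) \<inter> X \<noteq> {}"
  then obtain q where q: "gpath (V - boundary V E X) E q" "hd q \<in> T" "last q \<in> X"
    unfolding reach_def by auto
  then obtain x y where xy: "x \<in> set q" "x \<notin> X" "y \<in> X" "E x y"
    using successively_enters[of E q X] assms(2) unfolding gpath_def by blast
  then have "x \<in> boundary V E X"
    using assms(1) unfolding graph_def boundary_def by auto
  then show False using q(1) xy(1) unfolding gpath_def by auto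
qed

lemma boundary_reach_subset: "boundary V E (reach V E X P) \<subseteq> P"
proof
  fix y assume "y \<in> boundary V E (reach V E X P)"
  then obtain x where x: "x \<in> reach V E X P" and "E x y" "y \<in> V" "y \<notin> reach V E X P"
    unfolding boundary_def by auto
  obtain q where q: "gpath (V - P) E q" "hd q \<in> X - P" "last q = x"
    using x unfolding reach_def by auto
  show "y \<in> P"
  proof (rule ccontr)
    assume "y \<notin> P"
    have "y \<notin> set q" using in_reach_if_on_path[OF q(1,2)] \<open>y \<notin> reach V E X P\<close> by blast
    then have "gpath (V - P) E (q @ [y])"
      using q \<open>y \<notin> P\<close> \<open>y \<in> V\<close> \<open>E x y\<close> unfolding gpath_def
      by (auto simp: successively_append_iff)
    then have "y \<in> reach V E X P"
      using in_reach_if_on_path[of V P E "q @ [y]" X y] q(1,2) unfolding gpath_def by simp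
    then show False using \<open>y \<notin> reach V E X P\<close> by contradiction
  qed
qed

lemma lsep_boundary:
  assumes "S \<subseteq> X" "X \<inter> T = {}"
  shows "lsep V E S T (boundary V E X)"
  unfolding lsep_def separator_def
proof (intro conjI allI impI)
  fix p assume p: "gpath V E p \<and> hd p \<in> S \<and> last p \<in> T"
  then obtain x y where "x \<in> set p" "y \<in> set p" "x \<notin> - X" "y \<in> - X" "E x y"
    using successively_enters[of E p "- X"] assms unfolding gpath_def by blast
  then have "y \<in> set p \<inter> boundary V E X"
    using p unfolding gpath_def boundary_def by auto
  then show "set p \<inter> boundary V E X \<noteq> {}" by blast
qed (use assms in \<open>auto simp: boundary_def\<close>)

lemma card_boundary_submodular:
  assumes "finite V"
  shows "card (boundary V E (A \<union> B)) + card (boundary V E (A \<inter> B))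
       \<le> card (boundary V E A) + card (boundary V E B)"
proof -
  have fin: "finite (boundary V E X)" for X using assms unfolding boundary_def by auto
  have "card (boundary V E (A \<union> B)) + card (boundary V E (A \<inter> B))
      = card (boundary V E (A \<union> B) \<union> boundary V E (A \<inter> B))
        + card (boundary V E (A \<union> B) \<inter> boundary V E (A \<inter> B))"
    using card_Un_Int fin by blast
  also have "\<dots> \<le> card (boundary V E A \<union> boundary V E B) + card (boundary V E A \<inter> boundary V E B)"
    by (intro add_mono card_mono) (use fin in \<open>auto simp: boundary_def\<close>)
  also have "\<dots> = card (boundary V E A) + card (boundary V E B)"
    using card_Un_Int fin by metis
  finally show ?thesis .
qed

lemma lsep_mono: "lsep V E S T P \<Longrightarrow> S' \<subseteq> S \<Longrightarrow> T' \<subseteq> T \<Longrightarrow> lsep V E S' T' P"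
  unfolding lsep_def separator_def by blast

lemma lsep_insert_source:
  assumes "graph V E" "lsep V E S T P" "v \<notin> P" "v \<notin> reach V E T P"
  shows "lsep V E (S \<union> {v}) T P"
  unfolding lsep_def separator_def
proof (intro conjI allI impI)
  fix p assume p: "gpath V E p \<and> hd p \<in> S \<union> {v} \<and> last p \<in> T"
  show "set p \<inter> P \<noteq> {}"
  proof (cases "hd p \<in> S")
    case True
    then show ?thesis using p assms(2) unfolding lsep_def separator_def by blast
  next
    case False
    show ?thesis
    proof
      assume avoid: "set p \<inter> P = {}"
      have "last p \<in> set p" using p unfolding gpath_def by simp
      then have "hd (rev p) \<in> T - P" using avoid p by (auto simp: hd_rev)
      moreover have "gpath (V - P) E (rev p)"
        using gpath_rev[OF assms(1)] p avoid unfolding gpath_def by auto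
      moreover have "last (rev p) = v" using p False unfolding gpath_def by (simp add: last_rev)
      ultimately show False using assms(4) unfolding reach_def by blast
    qed
  qed
qed (use assms in \<open>auto simp: lsep_def separator_def\<close>)

lemma lsep_insert_target:
  assumes "lsep V E S T P" "v \<notin> reach V E S P"
  shows "lsep V E S (T \<union> {v}) P"
  unfolding lsep_def separator_def
proof (intro conjI allI impI)
  fix p assume p: "gpath V E p \<and> hd p \<in> S \<and> last p \<in> T \<union> {v}"
  show "set p \<inter> P \<noteq> {}"
  proof (cases "last p \<in> T")
    case True
    then show ?thesis using p assms(1) unfolding lsep_def separator_def by blast
  next
    case False
    show ?thesis
    proof
      assume avoid: "set p \<inter> P = {}"
      have "hd p \<in> set p" using p unfolding gpath_def by simp
      then have "hd p \<in> S - P" using avoid p by blast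
      moreover have "gpath (V - P) E p" using p avoid unfolding gpath_def by auto
      ultimately show False using assms(2) p False unfolding reach_def by auto
    qed
  qed
qed (use assms in \<open>auto simp: lsep_def separator_def\<close>)

lemma lambdaL_le_card: "lsep V E S T P \<Longrightarrow> lambdaL V E S T \<le> enat (card P)"
  unfolding lambdaL_def by (rule INF_lower) auto

lemma lambdaL_attained:
  assumes "lambdaL V E S T \<noteq> \<infinity>"
  obtains P where "lsep V E S T P" "enat (card P) = lambdaL V E S T"
proof -
  let ?M = "(\<lambda>P. enat (card P)) ` {P. lsep V E S T P}"
  have "?M \<noteq> {}"
  proof
    assume "?M = {}"
    then have "lambdaL V E S T = Inf {}" unfolding lambdaL_def by simp
    then show False using assms by (simp add: Inf_enat_def)
  qed
  then have "Inf ?M \<in> ?M" unfolding Inf_enat_def by (auto intro: LeastI)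
  then obtain P where "lsep V E S T P" "Inf ?M = enat (card P)" by blast
  then show ?thesis using that unfolding lambdaL_def by simp
qed

lemma min_lsep_iff_card_le:
  "min_lsep V E S T P \<longleftrightarrow> lsep V E S T P \<and> enat (card P) \<le> lambdaL V E S T"
  unfolding min_lsep_def using lambdaL_le_card[of V E S T P] by auto

lemma boundary_reach_min_lsep:
  assumes "graph V E" "S \<subseteq> V" "min_lsep V E S T P"
  shows "boundary V E (reach V E S P) = P"
proof -
  have P: "lsep V E S T P" "enat (card P) = lambdaL V E S T"
    using assms(3) unfolding min_lsep_def by auto
  then have "finite P" using assms(1) finite_subset
    unfolding graph_def lsep_def separator_def by blast
  have "S \<subseteq> reach V E S P" using diff_subset_reach[OF assms(2)] P(1) unfolding lsep_def by blast
  then have "lsep V E S T (boundary V E (reach V E S P))"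
    using lsep_boundary reach_disjoint_target[OF P(1)] by blast
  then have "enat (card P) \<le> enat (card (boundary V E (reach V E S P)))"
    using lambdaL_le_card P(2) by metis
  then have "card P \<le> card (boundary V E (reach V E S P))" by simp
  then show ?thesis using card_seteq[OF \<open>finite P\<close> boundary_reach_subset] by blast
qed

text \<open>Uncrossing, via submodularity of the boundary size.\<close>
lemma min_lsep_boundary_union:
  assumes "graph V E" "S \<subseteq> S'" "S' \<subseteq> V"
    and "min_lsep V E S T P\<^sub>0" "lsep V E S' T P" "card P \<le> card P\<^sub>0"
  shows "min_lsep V E S T (boundary V E (reach V E S' P \<union> reach V E S P\<^sub>0))"
proof -
  define A where "A = reach V E S' P"
  define B where "B = reach V E S P\<^sub>0"
  have P\<^sub>0: "lsep V E S T P\<^sub>0" "lambdaL V E S T = enat (card P\<^sub>0)"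
    using assms(4) unfolding min_lsep_def by auto
  have fin: "finite X" if "X \<subseteq> V" for X
    using assms(1) that finite_subset unfolding graph_def by blast
  have PV: "P \<subseteq> V" "P\<^sub>0 \<subseteq> V"
    using assms(5) P\<^sub>0(1) unfolding lsep_def separator_def by auto
  have "S \<subseteq> A"
    using diff_subset_reach[OF assms(3), of P E] assms(2,5) unfolding A_def lsep_def by blast
  moreover have "S \<subseteq> B"
    using diff_subset_reach[of S V P\<^sub>0 E] assms(2,3) P\<^sub>0(1) unfolding B_def lsep_def by blast
  moreover have "A \<inter> T = {}" "B \<inter> T = {}"
    unfolding A_def B_def by (fact reach_disjoint_target[OF assms(5)] reach_disjoint_target[OF P\<^sub>0(1)])+
  ultimately have "S \<subseteq> A \<union> B" "(A \<union> B) \<inter> T = {}" "S \<subseteq> A \<inter> B" "(A \<inter> B) \<inter> T = {}"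
    by auto
  then have U: "lsep V E S T (boundary V E (A \<union> B))"
    and I: "lsep V E S T (boundary V E (A \<inter> B))"
    using lsep_boundary by blast+
  have "enat (card P\<^sub>0) \<le> enat (card (boundary V E X))" if "lsep V E S T (boundary V E X)" for X
    using lambdaL_le_card[OF that] P\<^sub>0(2) by simp
  then have "card P\<^sub>0 \<le> card (boundary V E (A \<inter> B))" using I by simp
  moreover have "card (boundary V E A) \<le> card P"
    unfolding A_def by (rule card_mono[OF fin[OF PV(1)] boundary_reach_subset])
  moreover have "card (boundary V E B) \<le> card P\<^sub>0"
    unfolding B_def by (rule card_mono[OF fin[OF PV(2)] boundary_reach_subset])
  ultimately have "card (boundary V E (A \<union> B)) \<le> card P\<^sub>0"
    using card_boundary_submodular[of V E A B] assms(1,6) unfolding graph_def by linarith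
  then show ?thesis
    using U P\<^sub>0(2) unfolding min_lsep_iff_card_le A_def B_def by simp
qed

lemma lambdaL_insert_source_gt:
  assumes "graph V E" "S \<subseteq> V" "v \<in> V" "min_lsep V E S T P\<^sub>p"
    and farthest: "\<And>P. min_lsep V E S T P \<Longrightarrow> reach V E S P \<subseteq> reach V E S P\<^sub>p"
    and "v \<in> reach V E T P\<^sub>p \<union> P\<^sub>p"
  shows "lambdaL V E S T < lambdaL V E (S \<union> {v}) T"
proof (rule ccontr)
  have lambda_eq: "lambdaL V E S T = enat (card P\<^sub>p)" using assms(4) unfolding min_lsep_def by simp
  assume "\<not> ?thesis"
  then have le: "lambdaL V E (S \<union> {v}) T \<le> enat (card P\<^sub>p)" using lambda_eq by simp
  then obtain P where P: "lsep V E (S \<union> {v}) T P" "enat (card P) = lambdaL V E (S \<union> {v}) T"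
    using lambdaL_attained by (metis enat_ord_simps(4) infinity_ileE)
  define A where "A = reach V E (S \<union> {v}) P"
  define B where "B = reach V E S P\<^sub>p"
  define Q where "Q = boundary V E (A \<union> B)"
  have "card P \<le> card P\<^sub>p" using le P(2) by (metis enat_ord_simps(1))
  moreover have "S \<union> {v} \<subseteq> V" using assms(2,3) by blast
  ultimately have "min_lsep V E S T Q"
    using min_lsep_boundary_union[OF assms(1) Un_upper1 _ assms(4) P(1)]
    unfolding Q_def A_def B_def by blast
  have Q_disjoint: "Q \<inter> (A \<union> B) = {}" unfolding Q_def by (rule boundary_disjoint)
  then have "B \<subseteq> reach V E S Q" unfolding B_def by (intro reach_subset_reach_if_disjoint) blast
  then have "reach V E S Q = B" using farthest \<open>min_lsep V E S T Q\<close> unfolding B_def by blast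
  then have "Q = P\<^sub>p"
    using boundary_reach_min_lsep[OF assms(1,2)] \<open>min_lsep V E S T Q\<close> assms(4)
    unfolding B_def by metis
  have "T \<inter> (A \<union> B) = {}"
    using reach_disjoint_target P(1) assms(4) unfolding A_def B_def min_lsep_def by blast
  then have "reach V E T Q \<inter> (A \<union> B) = {}"
    unfolding Q_def by (rule reach_boundary_disjoint[OF assms(1)])
  moreover have "v \<in> A"
    using diff_subset_reach[of "S \<union> {v}" V P E] assms(2,3) P(1) unfolding A_def lsep_def by blast
  ultimately show False using assms(6) Q_disjoint \<open>Q = P\<^sub>p\<close> by blast
qed

lemma lambdaL_insert_target_gt:
  assumes "min_lsep V E S T P\<^sub>m"
    and closest: "\<And>P. min_lsep V E S T P \<Longrightarrow> reach V E S P\<^sub>m \<subseteq> reach V E S P"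
    and "v \<in> reach V E S P\<^sub>m"
  shows "lambdaL V E S T < lambdaL V E S (T \<union> {v})"
proof (rule ccontr)
  assume "\<not> ?thesis"
  then have le: "lambdaL V E S (T \<union> {v}) \<le> lambdaL V E S T" by simp
  moreover have "lambdaL V E S T \<noteq> \<infinity>" using assms(1) unfolding min_lsep_def by (metis enat.distinct(1))
  ultimately obtain P where P: "lsep V E S (T \<union> {v}) P" "enat (card P) = lambdaL V E S (T \<union> {v})"
    using lambdaL_attained by (metis infinity_ileE)
  have "lsep V E S T P" using lsep_mono[OF P(1)] by blast
  then have "min_lsep V E S T P" using le P(2) min_lsep_iff_card_le by metis
  then have "v \<in> reach V E S P" using closest assms(3) by blast
  then show False using reach_disjoint_target[OF P(1)] by blast
qed

theorem lemma6:
  fixes V :: "'a set" and E :: "'a \<Rightarrow> 'a \<Rightarrow> bool" and S T Pm Pp :: "'a set" and v :: 'a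
  assumes "graph V E"
    and "S \<subseteq> V" and "T \<subseteq> V" and "S \<inter> T = {}"
    and "min_lsep V E S T Pm" and "min_lsep V E S T Pp"
    and "\<And>P. min_lsep V E S T P \<Longrightarrow>
           reach V E S Pm \<subseteq> reach V E S P \<and> reach V E S P \<subseteq> reach V E S Pp"
    and "v \<in> V"
  shows "(lambdaL V E (S \<union> {v}) T > lambdaL V E S T \<longleftrightarrow> v \<in> reach V E T Pp \<union> Pp)
       \<and> (lambdaL V E S (T \<union> {v}) > lambdaL V E S T \<longleftrightarrow> v \<in> reach V E S Pm)"
proof (intro conjI iffI)
  have Pp: "lsep V E S T Pp" "lambdaL V E S T = enat (card Pp)"
    and Pm: "lsep V E S T Pm" "lambdaL V E S T = enat (card Pm)"
    using assms(5,6) unfolding min_lsep_def by auto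
  have closest: "reach V E S Pm \<subseteq> reach V E S P"
    and farthest: "reach V E S P \<subseteq> reach V E S Pp" if "min_lsep V E S T P" for P
    using assms(7)[OF that] by auto
  show "v \<in> reach V E T Pp \<union> Pp" if "lambdaL V E (S \<union> {v}) T > lambdaL V E S T"
  proof (rule ccontr)
    assume "v \<notin> reach V E T Pp \<union> Pp"
    then have "lambdaL V E (S \<union> {v}) T \<le> lambdaL V E S T"
      using lambdaL_le_card[OF lsep_insert_source[OF assms(1) Pp(1)]] Pp(2) by simp
    with that show False by simp
  qed
  show "lambdaL V E (S \<union> {v}) T > lambdaL V E S T" if "v \<in> reach V E T Pp \<union> Pp"
    by (rule lambdaL_insert_source_gt[OF assms(1,2,8,6) farthest that])
  show "v \<in> reach V E S Pm" if "lambdaL V E S (T \<union> {v}) > lambdaL V E S T"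
  proof (rule ccontr)
    assume "v \<notin> reach V E S Pm"
    then have "lambdaL V E S (T \<union> {v}) \<le> lambdaL V E S T"
      using lambdaL_le_card[OF lsep_insert_target[OF Pm(1)]] Pm(2) by simp
    with that show False by simp
  qed
  show "lambdaL V E S (T \<union> {v}) > lambdaL V E S T" if "v \<in> reach V E S Pm"
    by (rule lambdaL_insert_target_gt[OF assms(5) closest that])
qed

end
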